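(* Let $d\ge2$ and $L\ge1$ be integers, and define for real $x\in[0,L-1]$ $$\rho(x)=\frac{\Gamma(L+d)\,\Gamma(L)}{\Gamma(L+d+x)\,\Gamma(L-x)}.$$ Then $0<\rho(x)\le \exp\!\left(-\frac{2x(x+d)}{2L+d}\right)$ for all $x\in[0,L-1]$. In particular, for integers $0\le k\le L-1$, $$\frac{(L-1+d)!\,(L-1)!}{(L-1+d+k)!\,(L-1-k)!}\le e^{-\frac{2k(k+d)}{2L+d}}.$$
   Context: $\Gamma$ is the Euler gamma function, $\Gamma(n)=(n-1)!$. *)

theory Defs
  imports "HOL-Analysis.Analysis"
begin

definition rho :: "nat \<Rightarrow> nat \<Rightarrow> real \<Rightarrow> real" where
  "rho d L x = Gamma (real L + real d) * Gamma (real L)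
      / (Gamma (real L + real d + x) * Gamma (real L - x))"

end

theory Submission
  imports Defs
begin

text \<open>Taking logarithms, the bound says that
  \<open>g(t) = ln \<Gamma>(L + d + t) + ln \<Gamma>(L - t) - 2t(t + d)/(2L + d)\<close> satisfies \<open>g 0 \<le> g x\<close>.
  With \<open>a = L - t\<close> and \<open>b = L + d + t\<close> one has \<open>a + b = 2L + d\<close>, so
  \<open>g'(t) = \<psi>(b) - \<psi>(a) - 2(b - a)/(a + b)\<close>, which is nonnegative because the trigamma function
  dominates \<open>1/t\<close> and \<open>1/t \<ge> 4a/(a + t)\<^sup>2\<close> by AM-GM. The argument only needs \<open>d \<ge> 0\<close>.\<close>

lemma Polygamma_1_ge_inverse:
  fixes x :: real
  assumes "x > 0"
  shows "1 / x \<le> Polygamma 1 x"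
proof -
  have trigamma: "(\<lambda>n. inverse ((x + real n)\<^sup>2)) sums Polygamma 1 x"
    using Polygamma_LIMSEQ[of x 1] assms by (simp add: power2_eq_square)
  have vanishing: "(\<lambda>n. inverse (x + real n)) \<longlonglongrightarrow> 0"
    by (intro filterlim_compose[OF tendsto_inverse_0]
        tendsto_add_filterlim_at_infinity[OF tendsto_const]
        filterlim_at_top_imp_at_infinity filterlim_real_sequentially)
  have telescope:
    "(\<lambda>n. inverse (x + real n) - inverse (x + real (Suc n))) sums inverse x"
    using telescope_sums'[OF vanishing] by simp
  have "inverse (x + real n) - inverse (x + real (Suc n)) \<le> inverse ((x + real n)\<^sup>2)" for n
  proof -
    have pos: "x + real n > 0" using assms by simp
    have "inverse (x + real n) - inverse (x + real (Suc n)) = 1 / ((x + real n) * (x + real n + 1))"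
      using pos by (simp add: field_simps)
    also have "\<dots> \<le> 1 / ((x + real n) * (x + real n))"
      using pos by (intro divide_left_mono mult_left_mono) auto
    finally show ?thesis by (simp add: power2_eq_square divide_inverse)
  qed
  from sums_le[OF this telescope trigamma] show ?thesis by (simp add: divide_inverse)
qed

lemma Digamma_diff_ge:
  fixes a b :: real
  assumes "0 < a" "a \<le> b"
  shows "2 * (b - a) / (a + b) \<le> Digamma b - Digamma a"
proof -
  let ?f = "\<lambda>t. Digamma t - 2 * (t - a) / (a + t)"
  have "?f a \<le> ?f b"
  proof (rule DERIV_nonneg_imp_nondecreasing[OF assms(2)])
    fix t assume "a \<le> t" "t \<le> b"
    then have t: "t > 0" "a + t > 0" using assms by auto
    have "(?f has_real_derivative (Polygamma 1 t - 4 * a / (a + t)\<^sup>2)) (at t)"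
      using t by (auto intro!: derivative_eq_intros elim!: nonpos_Ints_cases
          simp: field_simps power2_eq_square)
    moreover have "4 * a / (a + t)\<^sup>2 \<le> 1 / t"
    proof -
      have "4 * a * t \<le> (a + t)\<^sup>2"
        using zero_le_power2[of "t - a"] by (simp add: power2_eq_square algebra_simps)
      then show ?thesis using t by (simp add: divide_simps)
    qed
    ultimately show "\<exists>y. (?f has_real_derivative y) (at t) \<and> 0 \<le> y"
      using Polygamma_1_ge_inverse[OF t(1)] by force
  qed
  then show ?thesis by simp
qed

lemma ln_Gamma_ratio_le:
  fixes p q x :: real
  assumes "0 < q" "q \<le> p" "0 \<le> x" "x < q"
  shows "ln_Gamma p + ln_Gamma q - ln_Gamma (p + x) - ln_Gamma (q - x)
           \<le> - (2 * x * (x + p - q)) / (p + q)"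
proof -
  let ?g = "\<lambda>t. ln_Gamma (p + t) + ln_Gamma (q - t) - 2 * t * (t + p - q) / (p + q)"
  have "?g 0 \<le> ?g x"
  proof (rule DERIV_nonneg_imp_nondecreasing[OF assms(3)])
    fix t assume t: "0 \<le> t" "t \<le> x"
    define a b where "a = q - t" and "b = p + t"
    have ab: "0 < a" "a \<le> b" using assms t unfolding a_def b_def by auto
    have "(?g has_real_derivative Digamma b - Digamma a - (4 * t + 2 * (p - q)) / (p + q)) (at t)"
      using ab assms unfolding a_def b_def by (auto intro!: derivative_eq_intros)
    moreover have "(4 * t + 2 * (p - q)) / (p + q) \<le> Digamma b - Digamma a"
      using Digamma_diff_ge[OF ab] by (simp add: a_def b_def algebra_simps)
    ultimately show "\<exists>y. (?g has_real_derivative y) (at t) \<and> 0 \<le> y"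
      by force
  qed
  then show ?thesis by simp
qed

lemma Gamma_ratio_le_exp:
  fixes p q x :: real
  assumes "0 < q" "q \<le> p" "0 \<le> x" "x < q"
  shows "Gamma p * Gamma q / (Gamma (p + x) * Gamma (q - x))
           \<le> exp (- (2 * x * (x + p - q)) / (p + q))"
proof -
  have pos: "p > 0" "q > 0" "p + x > 0" "q - x > 0" using assms by auto
  have "Gamma p * Gamma q / (Gamma (p + x) * Gamma (q - x))
          = exp (ln_Gamma p + ln_Gamma q - ln_Gamma (p + x) - ln_Gamma (q - x))"
    by (simp add: Gamma_real_pos_exp[OF pos(1)] Gamma_real_pos_exp[OF pos(2)]
        Gamma_real_pos_exp[OF pos(3)] Gamma_real_pos_exp[OF pos(4)] exp_add exp_diff)
  then show ?thesis using ln_Gamma_ratio_le[OF assms] by simp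
qed

lemma rho_pos:
  assumes "0 \<le> x" "x < real L"
  shows "0 < rho d L x"
  using assms unfolding rho_def by (intro divide_pos_pos mult_pos_pos Gamma_real_pos) auto

lemma rho_le_exp:
  assumes "0 \<le> x" "x < real L"
  shows "rho d L x \<le> exp (- (2 * x * (x + real d)) / (2 * real L + real d))"
proof -
  have "rho d L x \<le> exp (- (2 * x * (x + (real L + real d) - real L)) / (real L + real d + real L))"
    unfolding rho_def by (rule Gamma_ratio_le_exp) (use assms in auto)
  also have "\<dots> = exp (- (2 * x * (x + real d)) / (2 * real L + real d))"
    by (simp add: algebra_simps)
  finally show ?thesis .
qed

lemma rho_of_nat:
  assumes "k < L"
  shows "rho d L (real k) = real (fact (L - 1 + d) * fact (L - 1))
                              / real (fact (L - 1 + d + k) * fact (L - 1 - k))"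
proof -
  have shifts: "real L - real k = 1 + real (L - 1 - k)"
       "real L + real d = 1 + real (L - 1 + d)" "real L = 1 + real (L - 1)"
       "1 + real (L - 1 + d) + real k = 1 + real (L - 1 + d + k)"
    using assms by (auto simp: of_nat_diff)
  show ?thesis
    \<comment> \<open>the compound arguments must be rewritten before their subterm \<open>real L\<close>\<close>
    unfolding rho_def shifts(1) unfolding shifts(2) unfolding shifts(3,4) Gamma_fact by simp
qed

theorem mainTheorem6:
  fixes d L :: nat
  assumes "d \<ge> 2" and "L \<ge> 1"
  shows "(\<forall>x::real. 0 \<le> x \<and> x \<le> real L - 1 \<longrightarrow>
            0 < rho d L x \<and>
            rho d L x \<le> exp (- (2 * x * (x + real d)) / (2 * real L + real d)))
       \<and> (\<forall>k::nat. k \<le> L - 1 \<longrightarrow>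
            real (fact (L - 1 + d) * fact (L - 1)) / real (fact (L - 1 + d + k) * fact (L - 1 - k))
              \<le> exp (- (2 * real k * (real k + real d)) / (2 * real L + real d)))"
proof (intro conjI allI impI)
  fix x :: real
  assume "0 \<le> x \<and> x \<le> real L - 1"
  then show "0 < rho d L x" "rho d L x \<le> exp (- (2 * x * (x + real d)) / (2 * real L + real d))"
    using rho_pos rho_le_exp by auto
next
  fix k :: nat
  assume "k \<le> L - 1"
  then have "k < L" using assms(2) by linarith
  then show "real (fact (L - 1 + d) * fact (L - 1)) / real (fact (L - 1 + d + k) * fact (L - 1 - k))
               \<le> exp (- (2 * real k * (real k + real d)) / (2 * real L + real d))"
    using rho_le_exp[of "real k" L d] by (simp add: rho_of_nat)
qed

end
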